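(* Let $k\ge 1$ and let $G$ and $H$ be graphs with $\delta(G)\ge\delta(H)\ge k$. Then \[ \Gamma_{\times k,t}(G\times H)\ge\max\{\Gamma_{\times k,t}(G)\cdot\Gamma_t(H),\ \Gamma_{\times k,t}(H)\cdot\Gamma_t(G)\}. \]
   Context: For an integer $k\ge1$ and a graph $G$ with $\delta(G)\ge k$, a set $S\subseteq V(G)$ is a $k$-tuple total dominating set ($k$TDS) if $|N_G(x)\cap S|\ge k$ for every $x\in V(G)$, and $\Gamma_{\times k,t}(G)$ is the maximum cardinality of a minimal (with respect to inclusion) $k$TDS of $G$. $\Gamma_t(G)=\Gamma_{\times 1,t}(G)$ is the upper total domination number. The cross (direct) product $G\times H$ has vertex set $V(G)\times V(H)$, with $(g_1,h_1)\sim(g_2,h_2)$ iff $g_1g_2\in E(G)$ and $h_1h_2\in E(H)$. *)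

theory Defs
  imports Main
begin

definition graph :: "'a set \<Rightarrow> ('a \<Rightarrow> 'a \<Rightarrow> bool) \<Rightarrow> bool" where
  "graph V E \<longleftrightarrow> finite V \<and> V \<noteq> {} \<and>
     (\<forall>x y. E x y \<longrightarrow> x \<in> V \<and> y \<in> V) \<and>
     (\<forall>x y. E x y \<longrightarrow> E y x) \<and> (\<forall>x. \<not> E x x)"

definition nbhd :: "'a set \<Rightarrow> ('a \<Rightarrow> 'a \<Rightarrow> bool) \<Rightarrow> 'a \<Rightarrow> 'a set" where
  "nbhd V E x = {y \<in> V. E x y}"

definition min_degree :: "'a set \<Rightarrow> ('a \<Rightarrow> 'a \<Rightarrow> bool) \<Rightarrow> nat" where
  "min_degree V E = Min ((\<lambda>x. card (nbhd V E x)) ` V)"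

definition ktds :: "nat \<Rightarrow> 'a set \<Rightarrow> ('a \<Rightarrow> 'a \<Rightarrow> bool) \<Rightarrow> 'a set \<Rightarrow> bool" where
  "ktds k V E S \<longleftrightarrow> S \<subseteq> V \<and> (\<forall>x\<in>V. card (nbhd V E x \<inter> S) \<ge> k)"

definition minimal_ktds :: "nat \<Rightarrow> 'a set \<Rightarrow> ('a \<Rightarrow> 'a \<Rightarrow> bool) \<Rightarrow> 'a set \<Rightarrow> bool" where
  "minimal_ktds k V E S \<longleftrightarrow> ktds k V E S \<and> (\<forall>T. T \<subset> S \<longrightarrow> \<not> ktds k V E T)"

definition upper_ktds_num :: "nat \<Rightarrow> 'a set \<Rightarrow> ('a \<Rightarrow> 'a \<Rightarrow> bool) \<Rightarrow> nat" where
  "upper_ktds_num k V E = Max (card ` {S. minimal_ktds k V E S})"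

definition upper_total_dom_num :: "'a set \<Rightarrow> ('a \<Rightarrow> 'a \<Rightarrow> bool) \<Rightarrow> nat" where
  "upper_total_dom_num V E = upper_ktds_num 1 V E"

definition cross_vertices :: "'a set \<Rightarrow> 'b set \<Rightarrow> ('a \<times> 'b) set" where
  "cross_vertices VG VH = VG \<times> VH"

definition cross_edges :: "('a \<Rightarrow> 'a \<Rightarrow> bool) \<Rightarrow> ('b \<Rightarrow> 'b \<Rightarrow> bool) \<Rightarrow> ('a \<times> 'b) \<Rightarrow> ('a \<times> 'b) \<Rightarrow> bool" where
  "cross_edges EG EH p q \<longleftrightarrow> EG (fst p) (fst q) \<and> EH (snd p) (snd q)"

end

theory Submission
  imports Defs
begin

text \<open>
If S is a minimal a-tuple total dominating set of G and T a minimal b-tuple total dominating set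
of H, then S \<times> T is a minimal ab-tuple total dominating set of G \<times> H: the neighbourhood of (g, h)
meets S \<times> T in (N(g) \<inter> S) \<times> (N(h) \<inter> T), so domination multiplies; and minimality of S and T
provides, for each (s, t), vertices g and h whose neighbourhoods meet S and T in exactly a and b
points including s and t, so that removing (s, t) leaves (g, h) with only ab - 1 neighbours.
Taking S and T of maximum size gives the bound, once with (a, b) = (k, 1) and once with (1, k).
\<close>

lemma finite_nbhd: "graph V E \<Longrightarrow> finite (nbhd V E x)"
  unfolding graph_def nbhd_def by auto

lemma card_nbhd_ge_min_degree:
  assumes "graph V E" "x \<in> V"
  shows "min_degree V E \<le> card (nbhd V E x)"
  using assms unfolding min_degree_def graph_def by auto

lemma graph_cross:
  "graph VG EG \<Longrightarrow> graph VH EH \<Longrightarrow> graph (cross_vertices VG VH) (cross_edges EG EH)"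
  unfolding graph_def cross_vertices_def cross_edges_def by auto

lemma nbhd_cross_Int_Times:
  "nbhd (cross_vertices VG VH) (cross_edges EG EH) (g, h) \<inter> (S \<times> T)
     = (nbhd VG EG g \<inter> S) \<times> (nbhd VH EH h \<inter> T)"
  unfolding nbhd_def cross_vertices_def cross_edges_def by auto

lemma finite_minimal_ktds: "graph V E \<Longrightarrow> finite {S. minimal_ktds a V E S}"
  unfolding graph_def minimal_ktds_def ktds_def
  by (rule finite_subset[of _ "Pow V"]) auto

lemma ex_minimal_ktds:
  assumes "graph V E" "a \<le> min_degree V E"
  shows "\<exists>S. minimal_ktds a V E S"
proof -
  have "ktds a V E V"
    using card_nbhd_ge_min_degree[OF assms(1)] assms(2)
    unfolding ktds_def nbhd_def by (auto simp: Int_absorb2 intro: le_trans)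
  then obtain S where S: "ktds a V E S" and least: "\<And>T. ktds a V E T \<Longrightarrow> card S \<le> card T"
    using ex_has_least_nat[of "ktds a V E" V card] by blast
  have "finite S"
    using S assms(1) finite_subset unfolding ktds_def graph_def by blast
  then have "minimal_ktds a V E S"
    using S least psubset_card_mono unfolding minimal_ktds_def by (meson leD)
  then show ?thesis ..
qed

lemma upper_ktds_num_attained:
  assumes "graph V E" "a \<le> min_degree V E"
  shows "\<exists>S. minimal_ktds a V E S \<and> card S = upper_ktds_num a V E"
proof -
  have "upper_ktds_num a V E \<in> card ` {S. minimal_ktds a V E S}"
    unfolding upper_ktds_num_def
    using finite_minimal_ktds[OF assms(1)] ex_minimal_ktds[OF assms] by (intro Max_in) auto
  then show ?thesis by auto
qed

lemma card_le_upper_ktds_num: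
  "graph V E \<Longrightarrow> minimal_ktds a V E S \<Longrightarrow> card S \<le> upper_ktds_num a V E"
  unfolding upper_ktds_num_def by (intro Max_ge) (auto intro: finite_minimal_ktds)

lemma minimal_ktds_critical_vertex:
  assumes "graph V E" "minimal_ktds a V E S" "s \<in> S"
  obtains g where "g \<in> V" "s \<in> nbhd V E g" "card (nbhd V E g \<inter> S) \<le> a"
proof -
  have kS: "ktds a V E S" and "\<not> ktds a V E (S - {s})"
    using assms(2,3) unfolding minimal_ktds_def by auto
  moreover have "S - {s} \<subseteq> V" using kS unfolding ktds_def by auto
  ultimately obtain g where g: "g \<in> V" "card (nbhd V E g \<inter> (S - {s})) < a"
    unfolding ktds_def by force
  have ge: "a \<le> card (nbhd V E g \<inter> S)" using kS g(1) unfolding ktds_def by auto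
  have s: "s \<in> nbhd V E g"
  proof (rule ccontr)
    assume "s \<notin> nbhd V E g"
    then have "nbhd V E g \<inter> (S - {s}) = nbhd V E g \<inter> S" by auto
    with g ge show False by auto
  qed
  have "nbhd V E g \<inter> (S - {s}) = (nbhd V E g \<inter> S) - {s}" by auto
  then have "card (nbhd V E g \<inter> (S - {s})) = card (nbhd V E g \<inter> S) - 1"
    using finite_nbhd[OF assms(1)] s assms(3) by simp
  with g ge have "card (nbhd V E g \<inter> S) \<le> a" by linarith
  with g(1) s show thesis by (rule that)
qed

lemma ktds_cross_Times:
  assumes "ktds a VG EG S" "ktds b VH EH T"
  shows "ktds (a * b) (cross_vertices VG VH) (cross_edges EG EH) (S \<times> T)"
  unfolding ktds_def
proof (intro conjI ballI)
  show "S \<times> T \<subseteq> cross_vertices VG VH"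
    using assms unfolding ktds_def cross_vertices_def by auto
  fix x assume "x \<in> cross_vertices VG VH"
  then obtain g h where x: "x = (g, h)" "g \<in> VG" "h \<in> VH"
    unfolding cross_vertices_def by auto
  have "a \<le> card (nbhd VG EG g \<inter> S)" "b \<le> card (nbhd VH EH h \<inter> T)"
    using assms x unfolding ktds_def by auto
  then have "a * b \<le> card (nbhd VG EG g \<inter> S) * card (nbhd VH EH h \<inter> T)"
    by (rule mult_le_mono)
  then show "a * b \<le> card (nbhd (cross_vertices VG VH) (cross_edges EG EH) x \<inter> S \<times> T)"
    unfolding x nbhd_cross_Int_Times card_cartesian_product .
qed

lemma minimal_ktds_cross_Times:
  assumes G: "graph VG EG" and H: "graph VH EH" and "1 \<le> a" "1 \<le> b"
    and S: "minimal_ktds a VG EG S" and T: "minimal_ktds b VH EH T"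
  shows "minimal_ktds (a * b) (cross_vertices VG VH) (cross_edges EG EH) (S \<times> T)"
  unfolding minimal_ktds_def
proof (intro conjI allI impI notI)
  show "ktds (a * b) (cross_vertices VG VH) (cross_edges EG EH) (S \<times> T)"
    using S T unfolding minimal_ktds_def by (blast intro: ktds_cross_Times)
  fix U assume U: "U \<subset> S \<times> T" "ktds (a * b) (cross_vertices VG VH) (cross_edges EG EH) U"
  then obtain s t where st: "s \<in> S" "t \<in> T" "(s, t) \<notin> U" by auto
  obtain g where g: "g \<in> VG" "s \<in> nbhd VG EG g" "card (nbhd VG EG g \<inter> S) \<le> a"
    using minimal_ktds_critical_vertex[OF G S st(1)] .
  obtain h where h: "h \<in> VH" "t \<in> nbhd VH EH h" "card (nbhd VH EH h \<inter> T) \<le> b"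
    using minimal_ktds_critical_vertex[OF H T st(2)] .
  define N where "N = (nbhd VG EG g \<inter> S) \<times> (nbhd VH EH h \<inter> T)"
  have fin: "finite N" using finite_nbhd[OF G] finite_nbhd[OF H] unfolding N_def by simp
  have "(g, h) \<in> cross_vertices VG VH" using g h unfolding cross_vertices_def by auto
  then have "a * b \<le> card (nbhd (cross_vertices VG VH) (cross_edges EG EH) (g, h) \<inter> U)"
    using U(2) unfolding ktds_def by blast
  also have "\<dots> \<le> card (N - {(s, t)})"
    using U(1) st(3) fin unfolding N_def
    by (intro card_mono) (auto simp flip: nbhd_cross_Int_Times)
  also have "\<dots> = card N - 1"
    using fin g(2) h(2) st unfolding N_def by simp
  also have "\<dots> \<le> a * b - 1"
    using g(3) h(3) unfolding N_def card_cartesian_product by (intro diff_le_mono mult_le_mono)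
  finally have "a * b \<le> a * b - 1" .
  moreover have "0 < a * b" using \<open>1 \<le> a\<close> \<open>1 \<le> b\<close> by simp
  ultimately show False by linarith
qed

lemma upper_ktds_num_cross_ge:
  assumes G: "graph VG EG" and H: "graph VH EH" and "1 \<le> a" "1 \<le> b"
    and "a \<le> min_degree VG EG" "b \<le> min_degree VH EH"
  shows "upper_ktds_num a VG EG * upper_ktds_num b VH EH
           \<le> upper_ktds_num (a * b) (cross_vertices VG VH) (cross_edges EG EH)"
proof -
  obtain S where S: "minimal_ktds a VG EG S" "card S = upper_ktds_num a VG EG"
    using upper_ktds_num_attained[OF G \<open>a \<le> min_degree VG EG\<close>] by blast
  obtain T where T: "minimal_ktds b VH EH T" "card T = upper_ktds_num b VH EH"
    using upper_ktds_num_attained[OF H \<open>b \<le> min_degree VH EH\<close>] by blast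
  have "minimal_ktds (a * b) (cross_vertices VG VH) (cross_edges EG EH) (S \<times> T)"
    using minimal_ktds_cross_Times[OF G H assms(3,4) S(1) T(1)] .
  from card_le_upper_ktds_num[OF graph_cross[OF G H] this] S(2) T(2)
  show ?thesis by (simp add: card_cartesian_product)
qed

theorem mainTheorem14:
  fixes k :: nat
    and VG :: "'a set" and EG :: "'a \<Rightarrow> 'a \<Rightarrow> bool"
    and VH :: "'b set" and EH :: "'b \<Rightarrow> 'b \<Rightarrow> bool"
  assumes "k \<ge> 1"
    and "graph VG EG" and "graph VH EH"
    and "min_degree VG EG \<ge> min_degree VH EH"
    and "min_degree VH EH \<ge> k"
  shows "upper_ktds_num k (cross_vertices VG VH) (cross_edges EG EH)
           \<ge> max (upper_ktds_num k VG EG * upper_total_dom_num VH EH)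
                  (upper_ktds_num k VH EH * upper_total_dom_num VG EG)"
proof -
  have "k \<le> min_degree VG EG" "1 \<le> min_degree VG EG" "1 \<le> min_degree VH EH"
    using assms(1,4,5) by linarith+
  then have "upper_ktds_num k VG EG * upper_ktds_num 1 VH EH
               \<le> upper_ktds_num k (cross_vertices VG VH) (cross_edges EG EH)"
    and "upper_ktds_num 1 VG EG * upper_ktds_num k VH EH
               \<le> upper_ktds_num k (cross_vertices VG VH) (cross_edges EG EH)"
    using upper_ktds_num_cross_ge[OF assms(2,3), of k 1] upper_ktds_num_cross_ge[OF assms(2,3), of 1 k]
      assms(1,5) by simp_all
  then show ?thesis unfolding upper_total_dom_num_def by (simp add: mult.commute)
qed

end
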